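(* For any terms $s,t$, $\mathbf{W}\models s\approx t$ if, and only if, $\mathbf{R}\models s\approx t$.
   Context: Let $\omega^+=\omega\cup\{\omega\}$ with its natural order. A time warp is a map $f\colon\omega^+\to\omega^+$ preserving arbitrary joins (equivalently, order-preserving with $f(0)=0$ and $f(\omega)=\bigvee\{f(n)\mid n\in\omega\}$). Let $W$ be the set of time warps, ordered pointwise; let $p\in W$ be the predecessor map $p(m)=\bigvee\{n\in\omega\mid n<m\}$; for $f,g\in W$ let $f\backslash g$ be the largest time warp $h$ with $f\circ h\le g$. The time warp algebra is $\mathbf{W}=\langle W,\wedge,\vee,\circ,{}^\star,\mathrm{id}\rangle$ with pointwise meet/join, composition, $f^\star:=f\backslash p$, and identity. A time warp $f$ is regular if there exist $m\in\omega$, $l\in\{0,1\}$ and $k\in\mathbb{Z}\cup\{\omega\}$ with $f(n)=ln+k$ for all $n\in\omega$ with $n\ge m$ (i.e. $f$ is eventually constant or eventually of the form $n\mapsto n+k$). $\mathbf{R}$ denotes the subalgebra of $\mathbf{W}$ consisting of regular time warps. Terms are built from variables using $\wedge,\vee,\cdot,{}',1$, interpreted as $\wedge,\vee,\circ,{}^\star,\mathrm{id}$; an algebra satisfies $s\approx t$ if $s,t$ agree under every assignment into it. *)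

theory Defs
  imports Main "HOL-Library.Extended_Nat"
begin

text \<open>The chain omega+ = omega \<union> {omega} is modelled by enat (\<infinity> = omega).\<close>

definition time_warp :: "(enat \<Rightarrow> enat) \<Rightarrow> bool" where
  "time_warp f \<longleftrightarrow> (\<forall>A. f (Sup A) = Sup (f ` A))"

definition pred_tw :: "enat \<Rightarrow> enat" where
  "pred_tw m = Sup {enat n | n. enat n < m}"

definition tw_res :: "(enat \<Rightarrow> enat) \<Rightarrow> (enat \<Rightarrow> enat) \<Rightarrow> (enat \<Rightarrow> enat)" where
  "tw_res f g = (GREATEST h. time_warp h \<and> f \<circ> h \<le> g)"

definition tw_star :: "(enat \<Rightarrow> enat) \<Rightarrow> (enat \<Rightarrow> enat)" where
  "tw_star f = tw_res f pred_tw"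

text \<open>Regular: eventually f(n) = l*n + k with l \<in> {0,1}, k \<in> \<int> \<union> {omega}.
  Case k = omega or l = 0: eventually constant (value in omega+);
  case l = 1, k \<in> \<int>: eventually n \<mapsto> n + k.\<close>
definition regular_tw :: "(enat \<Rightarrow> enat) \<Rightarrow> bool" where
  "regular_tw f \<longleftrightarrow> time_warp f \<and>
     (\<exists>m::nat. (\<exists>c::enat. \<forall>n\<ge>m. f (enat n) = c)
             \<or> (\<exists>k::int. \<forall>n\<ge>m. 0 \<le> int n + k \<and> f (enat n) = enat (nat (int n + k))))"

datatype trm = Var nat | Meet trm trm | Join trm trm | Comp trm trm | Star trm | One

primrec eval_tw :: "(nat \<Rightarrow> (enat \<Rightarrow> enat)) \<Rightarrow> trm \<Rightarrow> (enat \<Rightarrow> enat)" where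
  "eval_tw \<sigma> (Var i) = \<sigma> i"
| "eval_tw \<sigma> (Meet s t) = (\<lambda>x. min (eval_tw \<sigma> s x) (eval_tw \<sigma> t x))"
| "eval_tw \<sigma> (Join s t) = (\<lambda>x. max (eval_tw \<sigma> s x) (eval_tw \<sigma> t x))"
| "eval_tw \<sigma> (Comp s t) = eval_tw \<sigma> s \<circ> eval_tw \<sigma> t"
| "eval_tw \<sigma> (Star s) = tw_star (eval_tw \<sigma> s)"
| "eval_tw \<sigma> One = id"

definition W_sat :: "trm \<Rightarrow> trm \<Rightarrow> bool" where
  "W_sat s t \<longleftrightarrow> (\<forall>\<sigma>. (\<forall>i. time_warp (\<sigma> i)) \<longrightarrow> eval_tw \<sigma> s = eval_tw \<sigma> t)"

definition R_sat :: "trm \<Rightarrow> trm \<Rightarrow> bool" where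
  "R_sat s t \<longleftrightarrow> (\<forall>\<sigma>. (\<forall>i. regular_tw (\<sigma> i)) \<longrightarrow> eval_tw \<sigma> s = eval_tw \<sigma> t)"

end

theory Submission
  imports Defs
begin

text \<open>Every time warp f is the pointwise limit of its truncations, which agree with f below M
  and continue regularly beyond it (as n \<mapsto> f(M) + n if f(\<omega>) = \<omega>, constantly otherwise).
  The star has the explicit form f'(x) = \<Squnion>{y | f(y) < x}; hence at every point it depends
  on only finitely many values of f, except at \<omega>, where f'(\<omega>) = \<omega> iff f maps \<omega> into \<omega>.
  So all term operations preserve eventual pointwise agreement, provided one also tracks whether
  \<omega> is mapped into \<omega>, and an identity holding for all truncated (regular) assignments passes to
  the limit.\<close>

lemma Sup_range_enat: "Sup (range enat) = \<infinity>"
proof -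
  have "\<not> finite (range enat)"
    by (metis finite_imageD infinite_UNIV_nat inj_onI enat.inject)
  then show ?thesis
    unfolding Sup_enat_def by auto
qed

lemma Sup_enat_attained: "Sup A = enat c \<Longrightarrow> A \<noteq> {} \<Longrightarrow> enat c \<in> A"
  by (metis Max_in Sup_enat_def enat.distinct(2))

lemma time_warp_zero: "time_warp f \<Longrightarrow> f 0 = 0"
  unfolding time_warp_def by (metis Sup_empty image_empty bot_enat_def)

lemma time_warp_mono: "time_warp f \<Longrightarrow> mono f"
proof (rule monoI)
  fix a b :: enat
  assume "time_warp f" and "a \<le> b"
  then have "f b = sup (f a) (f b)"
    unfolding time_warp_def by (metis Sup_insert ccpo_Sup_singleton image_insert image_empty sup_absorb2)
  then show "f a \<le> f b"
    by (metis sup.cobounded1)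
qed

lemma time_warp_infinity: "time_warp f \<Longrightarrow> f \<infinity> = (SUP n. f (enat n))"
  unfolding time_warp_def by (metis Sup_range_enat image_image)

lemma time_warpI:
  assumes mono: "mono f" and zero: "f 0 = 0" and infinity: "f \<infinity> = (SUP n. f (enat n))"
  shows "time_warp f"
  unfolding time_warp_def
proof
  fix A :: "enat set"
  have "f (Sup A) \<le> Sup (f ` A)"
  proof (cases "A = {} \<or> finite A")
    case True
    then show ?thesis
      using zero by (auto simp: Sup_enat_def bot_enat_def intro: Sup_upper)
  next
    case False
    have "f (enat n) \<le> Sup (f ` A)" for n
    proof -
      obtain a where "a \<in> A" "enat n \<le> a"
        using False finite_enat_bounded by (meson linear)
      then show ?thesis
        using mono by (meson SUP_upper2 monoD)
    qed
    moreover have "Sup A = \<infinity>"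
      using False by (simp add: Sup_enat_def)
    ultimately show ?thesis
      using infinity by (simp add: SUP_least)
  qed
  moreover have "Sup (f ` A) \<le> f (Sup A)"
    using mono by (meson Sup_upper SUP_least monoD)
  ultimately show "f (Sup A) = Sup (f ` A)"
    by (rule antisym)
qed

lemma time_warp_id: "time_warp id"
  unfolding time_warp_def by simp

lemma time_warp_comp: "time_warp f \<Longrightarrow> time_warp g \<Longrightarrow> time_warp (f \<circ> g)"
  unfolding time_warp_def by (simp add: image_comp)

lemma time_warp_max:
  assumes "time_warp f" "time_warp g"
  shows "time_warp (\<lambda>x. max (f x) (g x))"
  using assms unfolding time_warp_def sup_max[symmetric]
  by (simp add: Complete_Lattices.SUP_sup_distrib)

lemma time_warp_min:
  assumes f: "time_warp f" and g: "time_warp g"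
  shows "time_warp (\<lambda>x. min (f x) (g x))"
  unfolding time_warp_def
proof
  fix A :: "enat set"
  let ?S = "SUP c\<in>A. min (f c) (g c)"
  have "min (f (Sup A)) (g (Sup A)) \<le> ?S"
  proof (rule ccontr)
    assume "\<not> ?thesis"
    then have "?S < Sup (f ` A)" "?S < Sup (g ` A)"
      using f g unfolding time_warp_def by (auto simp: not_le)
    then obtain a b where ab: "a \<in> A" "b \<in> A" "?S < f a" "?S < g b"
      by (auto simp: less_SUP_iff)
    \<comment> \<open>A is a chain, so both time warps exceed ?S at the common point max a b \<in> A\<close>
    have "f a \<le> f (max a b)" "g b \<le> g (max a b)"
      using time_warp_mono[OF f] time_warp_mono[OF g] by (simp_all add: monoD)
    with ab have "?S < min (f (max a b)) (g (max a b))"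
      by (auto intro: order.strict_trans2)
    moreover have "min (f (max a b)) (g (max a b)) \<le> ?S"
      using ab by (intro SUP_upper) (simp add: max_def)
    ultimately show False
      by (simp add: not_le[symmetric])
  qed
  moreover have "?S \<le> min (f (Sup A)) (g (Sup A))"
    using time_warp_mono[OF f] time_warp_mono[OF g]
    by (auto intro!: SUP_least simp: Sup_upper monoD min.coboundedI1 min.coboundedI2)
  ultimately show "min (f (Sup A)) (g (Sup A)) = ?S"
    by (rule antisym)
qed

lemma less_imp_le_pred_tw: "y < x \<Longrightarrow> y \<le> pred_tw x"
  unfolding pred_tw_def by (cases y) (auto intro: Sup_upper)

lemma pred_tw_enat: "pred_tw (enat n) = enat (n - 1)"
proof (cases n)
  case (Suc m)
  have "Sup {enat k |k. enat k < enat n} \<le> enat m"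
    using Suc by (auto intro: Sup_least)
  moreover have "enat m \<le> Sup {enat k |k. enat k < enat n}"
    using Suc by (auto intro: Sup_upper)
  ultimately show ?thesis
    using Suc by (simp add: pred_tw_def)
qed (simp add: pred_tw_def bot_enat_def zero_enat_def)

lemma time_warp_Sup_less: "time_warp (\<lambda>x. Sup {y. f y < x})"
  unfolding time_warp_def
proof
  fix A :: "enat set"
  have "{y. f y < Sup A} = (\<Union>a\<in>A. {y. f y < a})"
    by (auto simp: less_Sup_iff)
  then show "Sup {y. f y < Sup A} = (SUP a\<in>A. Sup {y. f y < a})"
    using SUP_UNION[of id "\<lambda>a. {y. f y < a}" A] by simp
qed

lemma tw_star_eq:
  assumes f: "time_warp f"
  shows "tw_star f = (\<lambda>x. Sup {y. f y < x})"
  unfolding tw_star_def tw_res_def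
proof (rule Greatest_equality)
  let ?s = "\<lambda>x. Sup {y. f y < x}"
  have "f (?s x) \<le> pred_tw x" for x
    using f unfolding time_warp_def by (auto intro: SUP_least less_imp_le_pred_tw)
  then show "time_warp ?s \<and> f \<circ> ?s \<le> pred_tw"
    by (simp add: time_warp_Sup_less le_fun_def)
  fix h
  assume "time_warp h \<and> f \<circ> h \<le> pred_tw"
  then have h: "time_warp h" and fh: "\<And>x. f (h x) \<le> pred_tw x"
    by (auto simp: le_fun_def)
  have h_enat: "h (enat n) \<le> ?s (enat n)" for n
  proof (cases n)
    case 0
    then show ?thesis
      using time_warp_zero[OF h] by (simp add: zero_enat_def[symmetric])
  next
    case (Suc m)
    have "f (h (enat n)) \<le> enat m"
      using fh[of "enat n"] Suc by (simp add: pred_tw_enat)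
    also have "enat m < enat n"
      using Suc by simp
    finally show ?thesis
      by (simp add: Sup_upper)
  qed
  show "h \<le> ?s"
  proof (rule le_funI)
    fix x
    show "h x \<le> ?s x"
    proof (cases x)
      case (enat n)
      then show ?thesis using h_enat by simp
    next
      case infinity
      have "(SUP n. h (enat n)) \<le> (SUP n. ?s (enat n))"
        using h_enat by (rule SUP_mono')
      then show ?thesis
        using infinity time_warp_infinity[OF h] time_warp_infinity[OF time_warp_Sup_less] by simp
    qed
  qed
qed

lemma time_warp_tw_star: "time_warp f \<Longrightarrow> time_warp (tw_star f)"
  by (simp add: tw_star_eq time_warp_Sup_less)

lemma time_warp_eval_tw: "(\<And>i. time_warp (\<sigma> i)) \<Longrightarrow> time_warp (eval_tw \<sigma> u)"
  by (induction u)
    (simp_all add: time_warp_min time_warp_max time_warp_comp time_warp_tw_star time_warp_id)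

lemma time_warp_infinity_attained:
  assumes "time_warp f" "f \<infinity> \<noteq> \<infinity>"
  shows "\<exists>n. f (enat n) = f \<infinity>"
  using assms Sup_enat_attained[of "range (\<lambda>n. f (enat n))"]
  by (cases "f \<infinity>") (auto simp: time_warp_infinity)

lemma time_warp_infinity_less_enat:
  assumes f: "time_warp f" and less: "\<And>n. f (enat n) < enat m"
  shows "f \<infinity> < enat m"
proof -
  have "f \<infinity> \<le> enat m"
    using less by (simp add: time_warp_infinity[OF f] SUP_least less_imp_le)
  then obtain n where "f (enat n) = f \<infinity>"
    using time_warp_infinity_attained[OF f] by (metis enat_ord_simps(5))
  then show ?thesis
    using less by metis
qed

lemma Sup_less_eq_enat:
  assumes "mono f" "f (enat y) < x" "x \<le> f (enat (Suc y))"
  shows "Sup {z. f z < x} = enat y"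
proof (rule antisym)
  show "Sup {z. f z < x} \<le> enat y"
  proof (rule Sup_least)
    fix z
    assume "z \<in> {z. f z < x}"
    show "z \<le> enat y"
    proof (rule ccontr)
      assume "\<not> z \<le> enat y"
      then have "f (enat (Suc y)) \<le> f z"
        using assms(1) by (cases z) (auto intro: monoD)
      then show False
        using assms(3) \<open>z \<in> {z. f z < x}\<close> by simp
    qed
  qed
  show "enat y \<le> Sup {z. f z < x}"
    using assms by (simp add: Sup_upper)
qed

lemma Sup_less_eq_infinity:
  assumes "\<And>n. f (enat n) < x"
  shows "Sup {z. f z < x} = \<infinity>"
proof -
  have "range enat \<subseteq> {z. f z < x}"
    using assms by auto
  then show ?thesis
    by (metis Sup_range_enat Sup_subset_mono top.extremum_unique top_enat_def)
qed

lemma time_warp_less_cases: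
  assumes f: "time_warp f" and "x \<noteq> 0"
  obtains "\<And>n. f (enat n) < x"
  | y where "f (enat y) < x" "x \<le> f (enat (Suc y))"
proof (cases "\<forall>n. f (enat n) < x")
  case False
  then obtain n where "\<not> f (enat n) < x"
    by blast
  moreover have "f (enat 0) < x"
    using assms time_warp_zero[OF f] by (simp add: zero_enat_def[symmetric])
  ultimately obtain y where "f (enat y) < x" "\<not> f (enat (Suc y)) < x"
    using ex_least_nat_less[of "\<lambda>n. \<not> f (enat n) < x" n] by blast
  then show ?thesis
    using that(2) by (simp add: not_less)
qed (use that(1) in blast)

definition truncate_tw :: "nat \<Rightarrow> (enat \<Rightarrow> enat) \<Rightarrow> enat \<Rightarrow> enat" where
  "truncate_tw M f x =
    (if x \<le> enat M then f x else if f \<infinity> = \<infinity> then f (enat M) + x else f \<infinity>)"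

lemma truncate_tw_le: "x \<le> enat M \<Longrightarrow> truncate_tw M f x = f x"
  by (simp add: truncate_tw_def)

lemma truncate_tw_infinity: "truncate_tw M f \<infinity> = f \<infinity>"
  by (simp add: truncate_tw_def)

lemma time_warp_truncate_tw:
  assumes f: "time_warp f"
  shows "time_warp (truncate_tw M f)"
proof (rule time_warpI)
  have mono_f: "mono f"
    using f by (rule time_warp_mono)
  show "mono (truncate_tw M f)"
  proof (rule monoI)
    fix x y :: enat
    assume "x \<le> y"
    moreover have "f x \<le> f \<infinity>" "x \<le> enat M \<Longrightarrow> f x \<le> f (enat M)"
      using mono_f by (simp_all add: monoD)
    ultimately show "truncate_tw M f x \<le> truncate_tw M f y"
      using mono_f by (auto simp: truncate_tw_def monoD add_mono intro: add_increasing2)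
  qed
  show "truncate_tw M f 0 = 0"
    using time_warp_zero[OF f] by (simp add: truncate_tw_le)
  have "truncate_tw M f \<infinity> \<le> (SUP n. truncate_tw M f (enat n))"
  proof (cases "f \<infinity> = \<infinity>")
    case True
    have "enat k \<le> truncate_tw M f (enat (k + Suc M))" for k
      using True by (simp add: truncate_tw_def add_increasing)
    then have "(SUP k. enat k) \<le> (SUP n. truncate_tw M f (enat n))"
      by (meson SUP_mono UNIV_I)
    then show ?thesis
      by (simp add: Sup_range_enat)
  next
    case False
    then have "truncate_tw M f \<infinity> = truncate_tw M f (enat (Suc M))"
      by (auto simp: truncate_tw_def)
    then show ?thesis
      by (metis SUP_upper UNIV_I)
  qed
  moreover have "(SUP n. truncate_tw M f (enat n)) \<le> truncate_tw M f \<infinity>"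
    using \<open>mono (truncate_tw M f)\<close> by (simp add: SUP_least monoD)
  ultimately show "truncate_tw M f \<infinity> = (SUP n. truncate_tw M f (enat n))"
    by (rule antisym)
qed

lemma regular_truncate_tw:
  assumes f: "time_warp f"
  shows "regular_tw (truncate_tw M f)"
  unfolding regular_tw_def
proof (intro conjI)
  show "time_warp (truncate_tw M f)"
    using f by (rule time_warp_truncate_tw)
  have beyond: "truncate_tw M f (enat n) =
      (if f \<infinity> = \<infinity> then f (enat M) + enat n else f \<infinity>)" if "n \<ge> Suc M" for n
    using that by (simp add: truncate_tw_def)
  show "\<exists>m. (\<exists>c. \<forall>n\<ge>m. truncate_tw M f (enat n) = c) \<or>
      (\<exists>k::int. \<forall>n\<ge>m. 0 \<le> int n + k \<and> truncate_tw M f (enat n) = enat (nat (int n + k)))"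
  proof (cases "f \<infinity> = \<infinity>")
    case True
    show ?thesis
    proof (cases "f (enat M)")
      case (enat a)
      then show ?thesis
        using True beyond by (intro exI[of _ "Suc M"] disjI2 exI[of _ "int a"]) auto
    next
      case infinity
      then show ?thesis
        using True beyond by (intro exI[of _ "Suc M"] disjI1 exI[of _ "\<infinity>"]) auto
    qed
  next
    case False
    then show ?thesis
      using beyond by (intro exI[of _ "Suc M"] disjI1 exI[of _ "f \<infinity>"]) auto
  qed
qed

definition preserves_finite :: "(enat \<Rightarrow> enat) \<Rightarrow> bool" where
  "preserves_finite f \<longleftrightarrow> (\<forall>n. f (enat n) < \<infinity>)"

lemma preserves_finite_truncate_tw:
  assumes "preserves_finite f"
  shows "preserves_finite (truncate_tw M f)"
  unfolding preserves_finite_def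
proof
  fix n
  have fin: "\<And>k. f (enat k) < \<infinity>"
    using assms unfolding preserves_finite_def by blast
  then obtain a where "f (enat M) = enat a"
    using less_infinityE by blast
  then show "truncate_tw M f (enat n) < \<infinity>"
    using fin[of n] by (auto simp: truncate_tw_def)
qed

lemma preserves_finite_max:
  "preserves_finite (\<lambda>x. max (f x) (g x)) \<longleftrightarrow> preserves_finite f \<and> preserves_finite g"
  unfolding preserves_finite_def by (simp only: max_less_iff_conj) blast

lemma preserves_finite_min:
  assumes "mono f" "mono g"
  shows "preserves_finite (\<lambda>x. min (f x) (g x)) \<longleftrightarrow> preserves_finite f \<or> preserves_finite g"
proof
  assume fin: "preserves_finite (\<lambda>x. min (f x) (g x))"
  show "preserves_finite f \<or> preserves_finite g"
  proof (rule ccontr)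
    assume "\<not> ?thesis"
    then obtain a b where "\<not> f (enat a) < \<infinity>" "\<not> g (enat b) < \<infinity>"
      unfolding preserves_finite_def by blast
    moreover have "f (enat a) \<le> f (enat (max a b))" "g (enat b) \<le> g (enat (max a b))"
      using assms by (simp_all add: monoD)
    ultimately have "\<not> min (f (enat (max a b))) (g (enat (max a b))) < \<infinity>"
      by (auto simp only: min_less_iff_disj dest: order.strict_trans1)
    then show False
      using fin unfolding preserves_finite_def by blast
  qed
qed (auto simp only: preserves_finite_def min_less_iff_disj)

lemma preserves_finite_comp_factors:
  assumes f: "time_warp f" and g: "time_warp g"
    and fin: "preserves_finite (f \<circ> g)" and fg_inf: "f (g \<infinity>) = \<infinity>"
  shows "preserves_finite f \<and> preserves_finite g"
proof
  have fg_fin: "\<And>n. f (g (enat n)) < \<infinity>"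
    using fin unfolding preserves_finite_def by simp
  have g_inf: "g \<infinity> = \<infinity>"
  proof (rule ccontr)
    assume "g \<infinity> \<noteq> \<infinity>"
    then obtain n where "g (enat n) = g \<infinity>"
      using time_warp_infinity_attained[OF g] by blast
    then show False
      using fg_fin[of n] fg_inf by simp
  qed
  show "preserves_finite g"
    unfolding preserves_finite_def
  proof
    fix n
    have "g (enat n) \<noteq> \<infinity>"
    proof
      assume "g (enat n) = \<infinity>"
      with fg_fin[of n] fg_inf g_inf show False
        by simp
    qed
    then show "g (enat n) < \<infinity>"
      by simp
  qed
  show "preserves_finite f"
    unfolding preserves_finite_def
  proof
    fix y
    have "enat y < (SUP n. g (enat n))"
      using g_inf time_warp_infinity[OF g] by simp
    then obtain n where "enat y < g (enat n)"
      by (auto simp: less_SUP_iff)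
    then have "f (enat y) \<le> f (g (enat n))"
      using time_warp_mono[OF f] by (simp add: monoD)
    then show "f (enat y) < \<infinity>"
      using fg_fin[of n] by (rule order.strict_trans1)
  qed
qed

lemma preserves_finite_comp:
  assumes f: "time_warp f" and g: "time_warp g"
  shows "preserves_finite (f \<circ> g) \<longleftrightarrow>
    preserves_finite f \<and> preserves_finite g \<or> f (g \<infinity>) < \<infinity>"
proof
  assume "preserves_finite (f \<circ> g)"
  then show "preserves_finite f \<and> preserves_finite g \<or> f (g \<infinity>) < \<infinity>"
    using preserves_finite_comp_factors[OF f g] enat_ord_simps(4) by blast
next
  assume "preserves_finite f \<and> preserves_finite g \<or> f (g \<infinity>) < \<infinity>"
  then show "preserves_finite (f \<circ> g)"
  proof
    assume "preserves_finite f \<and> preserves_finite g"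
    then show ?thesis
      unfolding preserves_finite_def by (metis comp_apply less_infinityE)
  next
    assume fg_fin: "f (g \<infinity>) < \<infinity>"
    have "f (g (enat n)) \<le> f (g \<infinity>)" for n
      using time_warp_mono[OF f] time_warp_mono[OF g] by (simp add: monoD)
    then show ?thesis
      unfolding preserves_finite_def comp_def using fg_fin by (blast intro: order.strict_trans1)
  qed
qed

lemma preserves_finite_tw_star:
  assumes f: "time_warp f"
  shows "preserves_finite (tw_star f) \<longleftrightarrow> f \<infinity> = \<infinity>"
proof
  assume fin: "preserves_finite (tw_star f)"
  show "f \<infinity> = \<infinity>"
  proof (rule ccontr)
    assume "f \<infinity> \<noteq> \<infinity>"
    then obtain c where "f \<infinity> < enat c"
      by (cases "f \<infinity>") auto
    then have "\<infinity> \<le> tw_star f (enat c)"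
      unfolding tw_star_eq[OF f] by (intro Sup_upper) simp
    moreover have "tw_star f (enat c) < \<infinity>"
      using fin unfolding preserves_finite_def by blast
    ultimately show False
      by simp
  qed
next
  assume f_inf: "f \<infinity> = \<infinity>"
  show "preserves_finite (tw_star f)"
    unfolding preserves_finite_def tw_star_eq[OF f]
  proof
    fix n
    show "Sup {y. f y < enat n} < \<infinity>"
    proof (cases "enat n = 0")
      case True
      then show ?thesis
        by (simp add: bot_enat_def)
    next
      case False
      show ?thesis
      proof (rule time_warp_less_cases[OF f False])
        assume "\<And>k. f (enat k) < enat n"
        then have "f \<infinity> < enat n"
          by (rule time_warp_infinity_less_enat[OF f])
        then show ?thesis
          using f_inf by simp
      next
        fix y
        assume "f (enat y) < enat n" "enat n \<le> f (enat (Suc y))"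
        then show ?thesis
          using Sup_less_eq_enat[OF time_warp_mono[OF f]] by simp
      qed
    qed
  qed
qed

definition tw_limit :: "(nat \<Rightarrow> enat \<Rightarrow> enat) \<Rightarrow> (enat \<Rightarrow> enat) \<Rightarrow> bool" where
  "tw_limit F f \<longleftrightarrow> (\<forall>x. eventually (\<lambda>M. F M x = f x) sequentially) \<and>
     (preserves_finite f \<longrightarrow> eventually (\<lambda>M. preserves_finite (F M)) sequentially)"

lemma tw_limitI:
  assumes "\<And>x. eventually (\<lambda>M. F M x = f x) sequentially"
    and "preserves_finite f \<Longrightarrow> eventually (\<lambda>M. preserves_finite (F M)) sequentially"
  shows "tw_limit F f"
  using assms unfolding tw_limit_def by blast

lemma tw_limit_pointwise: "tw_limit F f \<Longrightarrow> eventually (\<lambda>M. F M x = f x) sequentially"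
  unfolding tw_limit_def by blast

lemma tw_limit_preserves_finite:
  "tw_limit F f \<Longrightarrow> preserves_finite f \<Longrightarrow> eventually (\<lambda>M. preserves_finite (F M)) sequentially"
  unfolding tw_limit_def by blast

lemma tw_limit_unique:
  assumes "tw_limit F f" "tw_limit F g"
  shows "f = g"
proof
  fix x
  have "eventually (\<lambda>M. F M x = f x \<and> F M x = g x) sequentially"
    using assms by (simp add: tw_limit_pointwise eventually_conj)
  then obtain N where "\<And>M. M \<ge> N \<Longrightarrow> F M x = f x \<and> F M x = g x"
    by (auto simp: eventually_sequentially)
  then show "f x = g x"
    by (metis order.refl)
qed

lemma tw_limit_const: "tw_limit (\<lambda>M. f) f"
  by (rule tw_limitI) simp_all

lemma tw_limit_truncate_tw: "tw_limit (\<lambda>M. truncate_tw M f) f"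
proof (rule tw_limitI)
  fix x
  show "eventually (\<lambda>M. truncate_tw M f x = f x) sequentially"
  proof (cases x)
    case (enat n)
    then show ?thesis
      unfolding eventually_sequentially by (intro exI[of _ n]) (simp add: truncate_tw_le)
  next
    case infinity
    then show ?thesis
      by (simp add: truncate_tw_infinity)
  qed
qed (simp add: preserves_finite_truncate_tw)

lemma tw_limit_max:
  assumes F: "tw_limit F f" and G: "tw_limit G g"
  shows "tw_limit (\<lambda>M x. max (F M x) (G M x)) (\<lambda>x. max (f x) (g x))"
proof (rule tw_limitI)
  fix x
  have "eventually (\<lambda>M. F M x = f x \<and> G M x = g x) sequentially"
    using F G by (simp add: tw_limit_pointwise eventually_conj)
  then show "eventually (\<lambda>M. max (F M x) (G M x) = max (f x) (g x)) sequentially"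
    by (rule eventually_mono) simp
next
  assume "preserves_finite (\<lambda>x. max (f x) (g x))"
  then have "eventually (\<lambda>M. preserves_finite (F M) \<and> preserves_finite (G M)) sequentially"
    using F G by (simp add: preserves_finite_max tw_limit_preserves_finite eventually_conj)
  then show "eventually (\<lambda>M. preserves_finite (\<lambda>x. max (F M x) (G M x))) sequentially"
    by (simp add: preserves_finite_max)
qed

lemma tw_limit_min:
  assumes F: "tw_limit F f" and G: "tw_limit G g"
    and mono: "\<And>M. mono (F M)" "\<And>M. mono (G M)" "mono f" "mono g"
  shows "tw_limit (\<lambda>M x. min (F M x) (G M x)) (\<lambda>x. min (f x) (g x))"
proof (rule tw_limitI)
  fix x
  have "eventually (\<lambda>M. F M x = f x \<and> G M x = g x) sequentially"
    using F G by (simp add: tw_limit_pointwise eventually_conj)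
  then show "eventually (\<lambda>M. min (F M x) (G M x) = min (f x) (g x)) sequentially"
    by (rule eventually_mono) simp
next
  assume "preserves_finite (\<lambda>x. min (f x) (g x))"
  then have "preserves_finite f \<or> preserves_finite g"
    using preserves_finite_min[OF mono(3,4)] by blast
  then have "eventually (\<lambda>M. preserves_finite (F M) \<or> preserves_finite (G M)) sequentially"
    using tw_limit_preserves_finite[OF F] tw_limit_preserves_finite[OF G]
    by (auto elim: eventually_mono)
  then show "eventually (\<lambda>M. preserves_finite (\<lambda>x. min (F M x) (G M x))) sequentially"
    by (rule eventually_mono) (simp add: preserves_finite_min[OF mono(1,2)])
qed

lemma tw_limit_comp:
  assumes F: "tw_limit F f" and G: "tw_limit G g"
    and tw: "\<And>M. time_warp (F M)" "\<And>M. time_warp (G M)" "time_warp f" "time_warp g"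
  shows "tw_limit (\<lambda>M. F M \<circ> G M) (f \<circ> g)"
proof (rule tw_limitI)
  have pointwise: "eventually (\<lambda>M. F M (G M x) = f (g x)) sequentially" for x
  proof -
    have "eventually (\<lambda>M. G M x = g x \<and> F M (g x) = f (g x)) sequentially"
      using F G by (simp add: tw_limit_pointwise eventually_conj)
    then show ?thesis
      by (rule eventually_mono) simp
  qed
  then show "eventually (\<lambda>M. (F M \<circ> G M) x = (f \<circ> g) x) sequentially" for x
    by simp
  assume "preserves_finite (f \<circ> g)"
  then have "preserves_finite f \<and> preserves_finite g \<or> f (g \<infinity>) < \<infinity>"
    using preserves_finite_comp[OF tw(3,4)] by blast
  then have "eventually (\<lambda>M. preserves_finite (F M) \<and> preserves_finite (G M) \<or> F M (G M \<infinity>) < \<infinity>)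
      sequentially"
  proof
    assume "preserves_finite f \<and> preserves_finite g"
    then have "eventually (\<lambda>M. preserves_finite (F M) \<and> preserves_finite (G M)) sequentially"
      using tw_limit_preserves_finite[OF F] tw_limit_preserves_finite[OF G] by (simp add: eventually_conj)
    then show ?thesis
      by (rule eventually_mono) blast
  next
    assume "f (g \<infinity>) < \<infinity>"
    then show ?thesis
      using pointwise[of \<infinity>] by (auto elim: eventually_mono)
  qed
  then show "eventually (\<lambda>M. preserves_finite (F M \<circ> G M)) sequentially"
    by (rule eventually_mono) (simp add: preserves_finite_comp[OF tw(1,2)])
qed

lemma tw_limit_eventually_less:
  assumes F: "tw_limit F f" and tw_F: "\<And>M. time_warp (F M)" and f: "time_warp f"
    and less: "\<And>n. f (enat n) < x"
  shows "eventually (\<lambda>M. \<forall>n. F M (enat n) < x) sequentially"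
proof (cases x)
  case (enat m)
  have "f \<infinity> < x"
    using time_warp_infinity_less_enat[OF f] less enat by blast
  show ?thesis
    using tw_limit_pointwise[OF F, of \<infinity>]
  proof (rule eventually_mono)
    fix M
    assume "F M \<infinity> = f \<infinity>"
    have "F M (enat n) < x" for n
    proof -
      have "F M (enat n) \<le> F M \<infinity>"
        using time_warp_mono[OF tw_F] by (simp add: monoD)
      also have "\<dots> < x"
        using \<open>F M \<infinity> = f \<infinity>\<close> \<open>f \<infinity> < x\<close> by simp
      finally show ?thesis .
    qed
    then show "\<forall>n. F M (enat n) < x" ..
  qed
next
  case infinity
  then have "preserves_finite f"
    using less by (simp add: preserves_finite_def)
  then show ?thesis
    using tw_limit_preserves_finite[OF F] infinity by (simp add: preserves_finite_def)
qed

lemma tw_limit_Sup_less: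
  assumes F: "tw_limit F f" and tw_F: "\<And>M. time_warp (F M)" and f: "time_warp f"
  shows "eventually (\<lambda>M. Sup {y. F M y < x} = Sup {y. f y < x}) sequentially"
proof (cases "x = 0")
  case False
  show ?thesis
  proof (rule time_warp_less_cases[OF f False])
    assume less: "\<And>n. f (enat n) < x"
    then show ?thesis
      using tw_limit_eventually_less[OF F tw_F f less]
      by (elim eventually_mono) (simp add: Sup_less_eq_infinity)
  next
    fix y
    assume y: "f (enat y) < x" "x \<le> f (enat (Suc y))"
    have "eventually (\<lambda>M. F M (enat y) = f (enat y) \<and> F M (enat (Suc y)) = f (enat (Suc y)))
        sequentially"
      using F by (simp add: tw_limit_pointwise eventually_conj)
    then show ?thesis
    proof (rule eventually_mono)
      fix M
      assume "F M (enat y) = f (enat y) \<and> F M (enat (Suc y)) = f (enat (Suc y))"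
      then show "Sup {z. F M z < x} = Sup {z. f z < x}"
        using y Sup_less_eq_enat[OF time_warp_mono[OF tw_F], of M y x]
          Sup_less_eq_enat[OF time_warp_mono[OF f], of y x] by simp
    qed
  qed
qed simp

lemma tw_limit_tw_star:
  assumes F: "tw_limit F f" and tw_F: "\<And>M. time_warp (F M)" and f: "time_warp f"
  shows "tw_limit (\<lambda>M. tw_star (F M)) (tw_star f)"
proof (rule tw_limitI)
  show "eventually (\<lambda>M. tw_star (F M) x = tw_star f x) sequentially" for x
    using tw_limit_Sup_less[OF F tw_F f] by (simp add: tw_star_eq tw_F f)
next
  assume "preserves_finite (tw_star f)"
  then have "f \<infinity> = \<infinity>"
    using preserves_finite_tw_star[OF f] by blast
  then have "eventually (\<lambda>M. F M \<infinity> = \<infinity>) sequentially"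
    using tw_limit_pointwise[OF F, of \<infinity>] by simp
  then show "eventually (\<lambda>M. preserves_finite (tw_star (F M))) sequentially"
    by (rule eventually_mono) (simp add: preserves_finite_tw_star[OF tw_F])
qed

lemma tw_limit_eval_tw_truncate_tw:
  assumes tw: "\<And>i. time_warp (\<sigma> i)"
  shows "tw_limit (\<lambda>M. eval_tw (\<lambda>i. truncate_tw M (\<sigma> i)) u) (eval_tw \<sigma> u)"
proof -
  have tw_M: "time_warp (eval_tw (\<lambda>i. truncate_tw M (\<sigma> i)) v)" for M v
    using tw by (simp add: time_warp_eval_tw time_warp_truncate_tw)
  have tw_lim: "time_warp (eval_tw \<sigma> v)" for v
    using tw by (rule time_warp_eval_tw)
  show ?thesis
  proof (induction u)
    case (Var i)
    show ?case
      by (simp add: tw_limit_truncate_tw)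
  next
    case (Meet s t)
    show ?case
      unfolding eval_tw.simps
      by (rule tw_limit_min[OF Meet.IH time_warp_mono[OF tw_M] time_warp_mono[OF tw_M]
            time_warp_mono[OF tw_lim] time_warp_mono[OF tw_lim]])
  next
    case (Join s t)
    show ?case
      unfolding eval_tw.simps by (rule tw_limit_max[OF Join.IH])
  next
    case (Comp s t)
    show ?case
      unfolding eval_tw.simps by (rule tw_limit_comp[OF Comp.IH tw_M tw_M tw_lim tw_lim])
  next
    case (Star s)
    show ?case
      unfolding eval_tw.simps by (rule tw_limit_tw_star[OF Star.IH tw_M tw_lim])
  next
    case One
    show ?case
      unfolding eval_tw.simps by (rule tw_limit_const)
  qed
qed

theorem theorem3p11:
  shows "W_sat s t \<longleftrightarrow> R_sat s t"
proof
  assume "W_sat s t"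
  then show "R_sat s t"
    unfolding W_sat_def R_sat_def regular_tw_def by blast
next
  assume R: "R_sat s t"
  show "W_sat s t"
    unfolding W_sat_def
  proof (intro allI impI)
    fix \<sigma> :: "nat \<Rightarrow> enat \<Rightarrow> enat"
    assume "\<forall>i. time_warp (\<sigma> i)"
    then have tw: "\<And>i. time_warp (\<sigma> i)" ..
    have "eval_tw \<tau> s = eval_tw \<tau> t" if "\<And>i. regular_tw (\<tau> i)" for \<tau>
      using R that unfolding R_sat_def by blast
    then have "eval_tw (\<lambda>i. truncate_tw M (\<sigma> i)) s = eval_tw (\<lambda>i. truncate_tw M (\<sigma> i)) t" for M
      by this (rule regular_truncate_tw[OF tw])
    then have "tw_limit (\<lambda>M. eval_tw (\<lambda>i. truncate_tw M (\<sigma> i)) s) (eval_tw \<sigma> t)"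
      using tw_limit_eval_tw_truncate_tw[OF tw, where u = t] by simp
    then show "eval_tw \<sigma> s = eval_tw \<sigma> t"
      using tw_limit_eval_tw_truncate_tw[OF tw, where u = s] by (rule tw_limit_unique[rotated])
  qed
qed

end
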